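(* Let $Q=\{0,1,\dots,q-1\}$. Let $M\subseteq Q^5$ be an MDS code of length $5$ with code distance $4$, and let $M'\subseteq Q^4$ be the projection of $M$ onto some $4$ of its $5$ coordinates. Then there exists an MDS code $C\subseteq Q^4$ of length $4$ with code distance $2$ such that $M'\subseteq C$.
   Context: Let $Q=\{0,\dots,q-1\}$. A $t$-dimensional face of $Q^d$ is a set obtained by fixing the values of $d-t$ of the coordinates and letting the remaining $t$ coordinates range over $Q$. A subset $M\subseteq Q^d$ is an MDS code of length $d$ and code distance $t+1$ (written $MDS(t+1,d,q)$) if $|M\cap\Gamma|=1$ for every $t$-dimensional face $\Gamma$ of $Q^d$. The projection of $M$ onto a set $S$ of coordinates is the set of restrictions of the elements of $M$ to the coordinates in $S$. *)

theory Defs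
  imports Main
begin

definition cube :: "nat \<Rightarrow> nat \<Rightarrow> nat list set" where
  "cube q d = {x. length x = d \<and> set x \<subseteq> {..<q}}"

definition face :: "nat \<Rightarrow> nat \<Rightarrow> nat set \<Rightarrow> nat list \<Rightarrow> nat list set" where
  "face q d F v = {x \<in> cube q d. \<forall>i<d. i \<notin> F \<longrightarrow> x ! i = v ! i}"

definition is_face :: "nat \<Rightarrow> nat \<Rightarrow> nat \<Rightarrow> nat list set \<Rightarrow> bool" where
  "is_face q d t \<Gamma> \<longleftrightarrow>
     (\<exists>F v. F \<subseteq> {..<d} \<and> card F = t \<and> v \<in> cube q d \<and> \<Gamma> = face q d F v)"

definition MDS :: "nat \<Rightarrow> nat \<Rightarrow> nat \<Rightarrow> nat list set \<Rightarrow> bool" where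
  "MDS dist d q M \<longleftrightarrow> M \<subseteq> cube q d \<and>
     (\<forall>\<Gamma>. is_face q d (dist - 1) \<Gamma> \<longrightarrow> card (M \<inter> \<Gamma>) = 1)"

definition proj :: "nat set \<Rightarrow> nat list \<Rightarrow> nat list" where
  "proj S x = map (\<lambda>i. x ! i) (sorted_list_of_set S)"

end

theory Submission
  imports Defs
begin

text \<open>Since M has code distance 4 in length 5, any two coordinates determine a codeword.
  Let k be the deleted coordinate and s0 < s1 < s2 < s3 the kept ones. Reading off coordinate k
  of the codeword with prescribed values at (s0, s1), resp. at (s2, s3), yields two latin squares
  L1, L2 of order q, and every projected codeword y satisfies L1 y0 y1 = L2 y2 y3. The words
  satisfying this equation form an MDS code of distance 2: once three coordinates are fixed, the
  latin property leaves exactly one value for the fourth.\<close>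

lemma card_eq_1_iff_ex1: "card A = 1 \<longleftrightarrow> (\<exists>!x. x \<in> A)"
  unfolding One_nat_def card_1_singleton_iff by auto

lemma MDS_unique_in_face:
  assumes "MDS dist d q M" and "F \<subseteq> {..<d}" and "card F = dist - 1" and "v \<in> cube q d"
  shows "\<exists>!c. c \<in> M \<and> c \<in> face q d F v"
proof -
  have "is_face q d (dist - 1) (face q d F v)"
    using assms(2-4) unfolding is_face_def by blast
  then have "card (M \<inter> face q d F v) = 1"
    using assms(1) unfolding MDS_def by blast
  then show ?thesis
    unfolding card_eq_1_iff_ex1 by simp
qed

lemma MDS_intro:
  assumes "M \<subseteq> cube q d"
    and "\<And>F v. F \<subseteq> {..<d} \<Longrightarrow> card F = dist - 1 \<Longrightarrow> v \<in> cube q d \<Longrightarrow>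
           \<exists>!c. c \<in> M \<and> c \<in> face q d F v"
  shows "MDS dist d q M"
  unfolding MDS_def
proof (intro conjI allI impI)
  fix \<Gamma> assume "is_face q d (dist - 1) \<Gamma>"
  then obtain F v where "F \<subseteq> {..<d}" "card F = dist - 1" "v \<in> cube q d" "\<Gamma> = face q d F v"
    unfolding is_face_def by blast
  with assms(2) have "\<exists>!c. c \<in> M \<inter> \<Gamma>" by simp
  then show "card (M \<inter> \<Gamma>) = 1"
    unfolding card_eq_1_iff_ex1 by simp
qed (use assms(1) in blast)

lemma nth_less_of_cube: "x \<in> cube q d \<Longrightarrow> i < d \<Longrightarrow> x ! i < q"
  unfolding cube_def by (auto dest: nth_mem)

lemma list_update_in_cube: "v \<in> cube q d \<Longrightarrow> t < q \<Longrightarrow> v[m := t] \<in> cube q d"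
  unfolding cube_def by (auto dest: set_update_subset_insert[THEN subsetD])

lemma face_singleton:
  assumes "v \<in> cube q d" and "m < d"
  shows "face q d {m} v = (\<lambda>t. v[m := t]) ` {..<q}"
proof (intro set_eqI iffI)
  fix x assume x: "x \<in> face q d {m} v"
  then have "x \<in> cube q d" unfolding face_def by blast
  moreover have "x = v[m := x ! m]"
    using x assms unfolding face_def cube_def by (intro nth_equalityI) (auto simp: nth_list_update)
  ultimately show "x \<in> (\<lambda>t. v[m := t]) ` {..<q}"
    using assms(2) nth_less_of_cube by blast
qed (use assms in \<open>auto simp: face_def nth_list_update intro: list_update_in_cube\<close>)

lemma MDS_2_intro:
  assumes "C \<subseteq> cube q d"
    and "\<And>m v. m < d \<Longrightarrow> v \<in> cube q d \<Longrightarrow> \<exists>!t. t < q \<and> v[m := t] \<in> C"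
  shows "MDS 2 d q C"
proof (rule MDS_intro[OF assms(1)])
  fix F v assume F: "F \<subseteq> {..<d}" "card F = 2 - 1" and v: "v \<in> cube q d"
  obtain m where m: "F = {m}" "m < d"
  proof -
    have "card F = 1" using F(2) by simp
    then obtain m where "F = {m}" by (rule card_1_singletonE)
    with F(1) that show thesis by blast
  qed
  obtain t where t: "t < q" "v[m := t] \<in> C"
    and uniq: "\<And>t'. t' < q \<Longrightarrow> v[m := t'] \<in> C \<Longrightarrow> t' = t"
    using assms(2)[OF m(2) v] by blast
  show "\<exists>!c. c \<in> C \<and> c \<in> face q d F v"
    unfolding m(1) face_singleton[OF v m(2)]
  proof (rule ex1I[of _ "v[m := t]"])
    fix c assume "c \<in> C \<and> c \<in> (\<lambda>t. v[m := t]) ` {..<q}"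
    then show "c = v[m := t]" using uniq by blast
  qed (use t in blast)
qed

lemma MDS_ex1_codeword_by_two_coords:
  assumes "MDS (d - 1) d q M" and "i < d" "j < d" "i \<noteq> j" and "a < q" "b < q"
  shows "\<exists>!c. c \<in> M \<and> c ! i = a \<and> c ! j = b"
proof -
  define F where "F = {..<d} - {i, j}"
  define v where "v = (replicate d a)[j := b]"
  have "card F = d - 1 - 1"
    using assms(2-4) unfolding F_def by (subst card_Diff_subset) auto
  moreover have v: "v \<in> cube q d"
    using assms(5,6) unfolding v_def by (intro list_update_in_cube) (auto simp: cube_def)
  moreover have "c \<in> face q d F v \<longleftrightarrow> c \<in> cube q d \<and> c ! i = a \<and> c ! j = b" for c
    using assms(2-4) unfolding face_def F_def v_def by (auto simp: nth_list_update)
  moreover have "M \<subseteq> cube q d" using assms(1) unfolding MDS_def by blast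
  ultimately show ?thesis
    using MDS_unique_in_face[OF assms(1), of F v] unfolding F_def by blast
qed

definition codeword_at :: "nat list set \<Rightarrow> nat \<Rightarrow> nat \<Rightarrow> nat \<Rightarrow> nat \<Rightarrow> nat list" where
  "codeword_at M i j a b = (THE c. c \<in> M \<and> c ! i = a \<and> c ! j = b)"

lemma codeword_at_swap: "codeword_at M i j a b = codeword_at M j i b a"
  unfolding codeword_at_def by (simp add: conj_commute conj_left_commute)

lemma
  assumes "MDS (d - 1) d q M" and "i < d" "j < d" "i \<noteq> j" and "a < q" "b < q"
  shows codeword_at_in: "codeword_at M i j a b \<in> M"
    and codeword_at_nth1: "codeword_at M i j a b ! i = a"
    and codeword_at_nth2: "codeword_at M i j a b ! j = b"
  using theI'[OF MDS_ex1_codeword_by_two_coords[OF assms]] unfolding codeword_at_def by blast+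

lemma codeword_at_eq:
  assumes "MDS (d - 1) d q M" and "i < d" "j < d" "i \<noteq> j" and "c \<in> M"
  shows "codeword_at M i j (c ! i) (c ! j) = c"
proof -
  have "c \<in> cube q d" using assms(1,5) unfolding MDS_def by blast
  then have "c ! i < q" "c ! j < q" using assms(2,3) by (simp_all add: nth_less_of_cube)
  then show ?thesis
    unfolding codeword_at_def
    using the1_equality[OF MDS_ex1_codeword_by_two_coords[OF assms(1-4)]] assms(5) by blast
qed

definition latin_square :: "nat \<Rightarrow> (nat \<Rightarrow> nat \<Rightarrow> nat) \<Rightarrow> bool" where
  "latin_square q L \<longleftrightarrow> (\<forall>a<q. \<forall>b<q. L a b < q)
     \<and> (\<forall>a<q. \<forall>c<q. \<exists>!b. b < q \<and> L a b = c)
     \<and> (\<forall>b<q. \<forall>c<q. \<exists>!a. a < q \<and> L a b = c)"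

lemma
  assumes "latin_square q L"
  shows latin_square_range: "a < q \<Longrightarrow> b < q \<Longrightarrow> L a b < q"
    and latin_square_row: "a < q \<Longrightarrow> c < q \<Longrightarrow> \<exists>!b. b < q \<and> L a b = c"
    and latin_square_col: "b < q \<Longrightarrow> c < q \<Longrightarrow> \<exists>!a. a < q \<and> L a b = c"
  using assms unfolding latin_square_def by simp_all

lemma codeword_at_row_unique:
  assumes M: "MDS (d - 1) d q M" and "distinct [i, j, k]" "i < d" "j < d" "k < d" and "a < q" "c < q"
  shows "\<exists>!b. b < q \<and> codeword_at M i j a b ! k = c"
proof -
  have ij: "i \<noteq> j" and ik: "i \<noteq> k" using assms(2) by auto
  define w where "w = codeword_at M i k a c"
  have w: "w \<in> M" "w ! i = a" "w ! k = c"
    unfolding w_def using assms(3,5-7) ik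
    by (intro codeword_at_in[OF M] codeword_at_nth1[OF M] codeword_at_nth2[OF M]; simp)+
  have "w ! j < q"
    using w(1) M assms(4) unfolding MDS_def by (blast intro: nth_less_of_cube)
  moreover have "codeword_at M i j a (w ! j) ! k = c"
    using codeword_at_eq[OF M assms(3,4) ij w(1)] w by simp
  moreover have "b = w ! j" if "b < q" "codeword_at M i j a b ! k = c" for b
  proof -
    let ?u = "codeword_at M i j a b"
    have "?u \<in> M" "?u ! i = a" "?u ! j = b"
      using assms(3,4,6) ij that(1)
      by (intro codeword_at_in[OF M] codeword_at_nth1[OF M] codeword_at_nth2[OF M]; simp)+
    then have "codeword_at M i k a c = ?u"
      using codeword_at_eq[OF M assms(3,5) ik, of ?u] that(2) by simp
    then show ?thesis using \<open>?u ! j = b\<close> unfolding w_def by simp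
  qed
  ultimately show ?thesis by blast
qed

lemma latin_square_codeword_at:
  assumes M: "MDS (d - 1) d q M" and "distinct [i, j, k]" "i < d" "j < d" "k < d"
  shows "latin_square q (\<lambda>a b. codeword_at M i j a b ! k)"
  unfolding latin_square_def
proof (intro conjI allI impI)
  fix a b assume "a < q" "b < q"
  then have "codeword_at M i j a b \<in> M"
    using assms(2-4) by (intro codeword_at_in[OF M]) auto
  then show "codeword_at M i j a b ! k < q"
    using M assms(5) unfolding MDS_def by (blast intro: nth_less_of_cube)
next
  fix a c assume "a < q" "c < q"
  then show "\<exists>!b. b < q \<and> codeword_at M i j a b ! k = c"
    by (rule codeword_at_row_unique[OF M assms(2-5)])
next
  fix b c assume "b < q" "c < q"
  then have "\<exists>!a. a < q \<and> codeword_at M j i b a ! k = c"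
    using codeword_at_row_unique[OF M _ assms(4,3,5)] assms(2) by auto
  then show "\<exists>!a. a < q \<and> codeword_at M i j a b ! k = c"
    by (simp add: codeword_at_swap[of M j i])
qed

lemma MDS_2_4_latin_square_equation:
  assumes L1: "latin_square q L1" and L2: "latin_square q L2"
  shows "MDS 2 4 q {y \<in> cube q 4. L1 (y ! 0) (y ! 1) = L2 (y ! 2) (y ! 3)}"
    (is "MDS 2 4 q ?C")
proof (rule MDS_2_intro)
  fix m v assume m: "m < (4::nat)" and v: "v \<in> cube q 4"
  have "length v = 4" using v unfolding cube_def by simp
  then obtain x0 x1 x2 x3 where x: "v = [x0, x1, x2, x3]"
    by (auto simp: length_Suc_conv eval_nat_numeral)
  have xq: "x0 < q" "x1 < q" "x2 < q" "x3 < q"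
    using v unfolding x cube_def by auto
  have c1: "L1 x0 x1 < q" and c2: "L2 x2 x3 < q"
    using xq by (simp_all add: latin_square_range[OF L1] latin_square_range[OF L2])
  have "m = 0 \<or> m = 1 \<or> m = 2 \<or> m = 3" using m by auto
  then show "\<exists>!t. t < q \<and> v[m := t] \<in> ?C"
  proof (elim disjE)
    assume "m = 0"
    then show ?thesis
      using latin_square_col[OF L1 xq(2) c2] by (simp add: x xq cube_def cong: conj_cong)
  next
    assume "m = 1"
    then show ?thesis
      using latin_square_row[OF L1 xq(1) c2] by (simp add: x xq cube_def cong: conj_cong)
  next
    assume "m = 2"
    then show ?thesis
      using latin_square_col[OF L2 xq(4) c1] by (simp add: x xq cube_def eq_commute cong: conj_cong)
  next
    assume "m = 3"
    then show ?thesis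
      using latin_square_row[OF L2 xq(3) c1] by (simp add: x xq cube_def eq_commute cong: conj_cong)
  qed
qed auto

theorem proposition2:
  fixes q :: nat and M :: "nat list set" and S :: "nat set"
  assumes "MDS 4 5 q M"
    and "S \<subseteq> {..<5}" and "card S = 4"
  shows "\<exists>C. MDS 2 4 q C \<and> proj S ` M \<subseteq> C"
proof -
  have M: "MDS (5 - 1) 5 q M" using assms(1) by simp
  have "card ({..<5} - S) = 1"
    using assms(2,3) by (simp add: card_Diff_subset finite_subset)
  then obtain k where k: "{..<5} - S = {k}" by (rule card_1_singletonE)
  obtain s0 s1 s2 s3 where s: "sorted_list_of_set S = [s0, s1, s2, s3]"
    using length_sorted_list_of_set[of S] assms(3)
    by (auto simp: length_Suc_conv eval_nat_numeral simp del: length_sorted_list_of_set)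
  moreover have "finite S" using assms(2) finite_subset by blast
  ultimately have "distinct [s0, s1, s2, s3]" "set [s0, s1, s2, s3] = S"
    by (metis distinct_sorted_list_of_set, metis set_sorted_list_of_set)
  with k assms(2) have d: "distinct [s0, s1, s2, s3, k]" and lt: "s0 < 5" "s1 < 5" "s2 < 5" "s3 < 5" "k < 5"
    by auto
  define C where "C = {y \<in> cube q 4.
    codeword_at M s0 s1 (y ! 0) (y ! 1) ! k = codeword_at M s2 s3 (y ! 2) (y ! 3) ! k}"
  have "MDS 2 4 q C"
    unfolding C_def using d lt
    by (intro MDS_2_4_latin_square_equation latin_square_codeword_at[OF M]) auto
  moreover have "proj S x \<in> C" if "x \<in> M" for x
  proof -
    have "x \<in> cube q 5" using that M unfolding MDS_def by blast
    then show ?thesis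
      unfolding C_def proj_def s using d lt codeword_at_eq[OF M _ _ _ that]
      by (auto simp: cube_def nth_less_of_cube)
  qed
  ultimately show ?thesis by blast
qed

end
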